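(* Let $V$ be a real Hilbert space, $\mathcal D$ a dictionary, $V_n\subset V$ any subspace of dimension $n$ with orthonormal basis $(\phi_1,\dots,\phi_n)$, and $\kappa\in(0,1)$. If $(W_m)_{m\ge0}$ is generated by the worst case OMP algorithm with parameter $\kappa$, then $\lim_{m\to\infty}r_m=0$.
   Context: A dictionary is a set $\mathcal D\subset V$ of elements with $\|\omega\|=1$ for all $\omega\in\mathcal D$ whose finite linear combinations are dense in $V$. Worst case OMP: $W_0=\{0\}$; for $k\ge1$, take $v_k\in\operatorname{argmax}\{\|v-P_{W_{k-1}}v\|: v\in V_n,\ \|v\|=1\}$, then choose $\omega_k\in\mathcal D$ with $|\langle v_k-P_{W_{k-1}}v_k,\omega_k\rangle|\ge\kappa\sup_{\omega\in\mathcal D}|\langle v_k-P_{W_{k-1}}v_k,\omega\rangle|$, and set $W_k=\operatorname{span}\{\omega_1,\dots,\omega_k\}$ ($P_X$ is the orthogonal projection onto $X$). The residual is $r_m=\sum_{i=1}^n\|\phi_i-P_{W_m}\phi_i\|^2$. *)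

theory Defs
  imports "HOL-Analysis.Analysis"
begin

definition orth_proj :: "'a::real_inner set \<Rightarrow> 'a \<Rightarrow> 'a" where
  "orth_proj X v = (THE y. y \<in> X \<and> (\<forall>w\<in>X. inner (v - y) w = 0))"

definition dictionary :: "'a::real_normed_vector set \<Rightarrow> bool" where
  "dictionary D \<longleftrightarrow> (\<forall>\<omega>\<in>D. norm \<omega> = 1) \<and> closure (span D) = UNIV"

definition omp_space :: "(nat \<Rightarrow> 'a::real_vector) \<Rightarrow> nat \<Rightarrow> 'a set" where
  "omp_space \<omega> m = span (\<omega> ` {1..m})"

text \<open>Worst case OMP with parameter kappa, for V_n = span of phi 0..phi (n-1):
  v k and omega k are the choices made at step k >= 1.\<close>
definition worst_case_omp ::
  "'a::real_inner set \<Rightarrow> 'a set \<Rightarrow> real \<Rightarrow> (nat \<Rightarrow> 'a) \<Rightarrow> (nat \<Rightarrow> 'a) \<Rightarrow> bool" where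
  "worst_case_omp D Vn \<kappa> v \<omega> \<longleftrightarrow>
    (\<forall>k\<ge>1.
       v k \<in> Vn \<and> norm (v k) = 1 \<and>
       (\<forall>u\<in>Vn. norm u = 1 \<longrightarrow>
          norm (u - orth_proj (omp_space \<omega> (k - 1)) u)
            \<le> norm (v k - orth_proj (omp_space \<omega> (k - 1)) (v k))) \<and>
       \<omega> k \<in> D \<and>
       \<bar>inner (v k - orth_proj (omp_space \<omega> (k - 1)) (v k)) (\<omega> k)\<bar>
         \<ge> \<kappa> * (SUP \<eta>\<in>D. \<bar>inner (v k - orth_proj (omp_space \<omega> (k - 1)) (v k)) \<eta>\<bar>))"

definition omp_residual :: "nat \<Rightarrow> (nat \<Rightarrow> 'a::real_inner) \<Rightarrow> (nat \<Rightarrow> 'a) \<Rightarrow> nat \<Rightarrow> real" where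
  "omp_residual n \<phi> \<omega> m = (\<Sum>i<n. (norm (\<phi> i - orth_proj (omp_space \<omega> m) (\<phi> i)))\<^sup>2)"

end

theory Submission imports Defs begin

text \<open>Write P_k for the projection onto W_k and g_k = v_{k+1} - P_k v_{k+1} for the
  worst residual. Adding omega_{k+1} to W_k lowers r_k by at least the sum of the
  squares <phi_i, u> with u = omega_{k+1} - P_k omega_{k+1}; this sum dominates
  <v_{k+1}, u>^2, which equals <g_k, omega_{k+1}>^2 by self-adjointness of P_k.
  Telescoping the nonnegative residuals gives <g_k, omega_{k+1}> -> 0, the weak greedy
  choice transfers this to every dictionary element, and density of the dictionary makes
  g_k converge weakly to 0. Finite dimensionality of V_n upgrades this to convergence of
  r_k: since v_{k+1} is a unit vector of V_n, ||g_k||^2 = <g_k, v_{k+1}> is at most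
  the sum of |<phi_i, g_k>|, and the worst case choice of v_{k+1} gives r_k <= n ||g_k||^2.\<close>

lemma orthogonal_decomp_insert_orthogonal:
  fixes u v y :: "'a::real_inner"
  assumes y: "y \<in> span S" "\<forall>w\<in>span S. inner (v - y) w = 0"
    and u: "\<forall>w\<in>span S. inner u w = 0"
  shows "\<exists>z\<in>span (insert u S). \<forall>w\<in>span (insert u S). inner (v - z) w = 0"
proof (cases "u = 0")
  case True
  then show ?thesis using y by auto
next
  case False
  define c where "c = inner (v - y) u / inner u u"
  have "y + c *\<^sub>R u \<in> span (insert u S)"
    using y(1) span_mono[of S "insert u S"] by (auto intro: span_add span_scale span_base)
  moreover have "inner (v - (y + c *\<^sub>R u)) w = 0" if "w \<in> insert u S" for w
  proof (cases "w = u")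
    case True
    then show ?thesis using False by (simp add: c_def inner_diff_left inner_add_left)
  next
    case False
    then have "w \<in> span S" using that span_base by auto
    then have "inner (v - y) w = 0" "inner u w = 0" using y(2) u by blast+
    then show ?thesis by (simp add: algebra_simps inner_diff_left inner_add_left)
  qed
  then have "\<forall>w\<in>span (insert u S). inner (v - (y + c *\<^sub>R u)) w = 0"
    using orthogonal_to_span unfolding orthogonal_def by blast
  ultimately show ?thesis by blast
qed

lemma orthogonal_decomp_span_exists:
  fixes S :: "'a::real_inner set"
  assumes "finite S"
  shows "\<exists>y\<in>span S. \<forall>w\<in>span S. inner (v - y) w = 0"
  using assms
proof (induction S arbitrary: v)
  case empty
  then show ?case by auto
next
  case (insert a S)
  obtain pa where pa: "pa \<in> span S" "\<forall>w\<in>span S. inner (a - pa) w = 0"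
    using insert.IH by blast
  obtain y where y: "y \<in> span S" "\<forall>w\<in>span S. inner (v - y) w = 0"
    using insert.IH by blast
  have "span (insert a S) = span (insert (a - pa) S)"
    using pa(1) by (intro eq_span_insert_eq) simp
  then show ?case
    using orthogonal_decomp_insert_orthogonal[OF y pa(2)] by simp
qed

lemma orth_proj_unique:
  fixes X :: "'a::real_inner set"
  assumes "subspace X" "y \<in> X" "\<forall>w\<in>X. inner (v - y) w = 0"
    "y' \<in> X" "\<forall>w\<in>X. inner (v - y') w = 0"
  shows "y = y'"
proof -
  have "y - y' \<in> X" using assms by (simp add: subspace_diff)
  then have "inner (v - y') (y - y') - inner (v - y) (y - y') = 0" using assms by simp
  then have "inner (y - y') (y - y') = 0" by (simp add: inner_diff_left inner_diff_right)
  then show ?thesis by simp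
qed

lemma orth_proj_span:
  fixes S :: "'a::real_inner set"
  assumes "finite S"
  shows "orth_proj (span S) v \<in> span S \<and> (\<forall>w\<in>span S. inner (v - orth_proj (span S) v) w = 0)"
  unfolding orth_proj_def
proof (rule theI')
  show "\<exists>!y. y \<in> span S \<and> (\<forall>w\<in>span S. inner (v - y) w = 0)"
    using orthogonal_decomp_span_exists[OF assms] orth_proj_unique[OF subspace_span] by blast
qed

lemma orth_proj_span_in_span: "finite S \<Longrightarrow> orth_proj (span S) v \<in> span S"
  using orth_proj_span by blast

lemma orth_proj_span_orthogonal:
  "finite S \<Longrightarrow> w \<in> span S \<Longrightarrow> inner (v - orth_proj (span S) v) w = 0"
  using orth_proj_span by blast

lemma norm_orth_proj_span_residual_le:
  assumes "finite S" "x \<in> span S"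
  shows "norm (v - orth_proj (span S) v) \<le> norm (v - x)"
proof -
  let ?p = "orth_proj (span S) v"
  have "?p - x \<in> span S" using assms orth_proj_span_in_span span_diff by blast
  then have "orthogonal (v - ?p) (?p - x)"
    using orth_proj_span_orthogonal[OF assms(1)] by (simp add: orthogonal_def)
  then have "(norm (v - x))\<^sup>2 = (norm (v - ?p))\<^sup>2 + (norm (?p - x))\<^sup>2"
    using norm_add_Pythagorean[of "v - ?p" "?p - x"] by simp
  then have "(norm (v - ?p))\<^sup>2 \<le> (norm (v - x))\<^sup>2" by simp
  then show ?thesis by (rule power2_le_imp_le) simp
qed

lemma norm_orth_proj_span_residual_le_norm:
  "finite S \<Longrightarrow> norm (v - orth_proj (span S) v) \<le> norm v"
  using norm_orth_proj_span_residual_le[OF _ span_zero, of S v] by simp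

lemma inner_orth_proj_span_residual_commute:
  assumes "finite S"
  shows "inner (v - orth_proj (span S) v) w = inner v (w - orth_proj (span S) w)"
proof -
  let ?P = "orth_proj (span S)"
  have "inner (v - ?P v) (?P w) = 0" "inner (w - ?P w) (?P v) = 0"
    using assms orth_proj_span_in_span orth_proj_span_orthogonal by blast+
  then have "inner (v - ?P v) w = inner (v - ?P v) (w - ?P w)"
    and "inner (v - ?P v) (w - ?P w) = inner v (w - ?P w)"
    by (simp_all add: inner_diff_right inner_diff_left inner_commute)
  then show ?thesis by simp
qed

lemma orth_proj_span_insert_residual_le:
  fixes S :: "'a::real_inner set"
  assumes "finite S" "norm a \<le> 1"
  shows "(norm (v - orth_proj (span (insert a S)) v))\<^sup>2
    \<le> (norm (v - orth_proj (span S) v))\<^sup>2 - (inner v (a - orth_proj (span S) a))\<^sup>2"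
proof -
  let ?P = "orth_proj (span S)" and ?Q = "orth_proj (span (insert a S))"
  define u where "u = a - ?P a"
  define g where "g = v - ?P v"
  have fin: "finite (insert a S)" using assms by simp
  have sub: "span S \<subseteq> span (insert a S)" by (simp add: span_mono subset_insertI)
  have "u \<in> span (insert a S)" unfolding u_def
    using orth_proj_span_in_span[OF assms(1)] sub by (meson insertI1 span_base span_diff subsetD)
  then have approx: "?P v + c *\<^sub>R u \<in> span (insert a S)" for c
    using orth_proj_span_in_span[OF assms(1)] sub by (meson span_add span_scale subsetD)
  have gu: "inner g u = inner v u"
    unfolding g_def u_def using inner_orth_proj_span_residual_commute[OF assms(1), of v a]
      orth_proj_span_orthogonal[OF assms(1)] orth_proj_span_in_span[OF assms(1)]
    by (simp add: inner_diff_right)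
  have "norm u \<le> 1"
    unfolding u_def using norm_orth_proj_span_residual_le_norm[OF assms(1), of a] assms(2) by simp
  then have uu1: "inner u u \<le> 1"
    by (metis norm_ge_zero power2_norm_eq_inner power_le_one)
  show ?thesis
  proof (cases "u = 0")
    case True
    then show ?thesis
      using norm_orth_proj_span_residual_le[OF fin approx[of 0]] by (simp add: u_def power_mono)
  next
    case False
    define c where "c = inner v u / inner u u"
    have uu: "0 < inner u u" using False by simp
    have "norm (v - ?Q v) \<le> norm (g - c *\<^sub>R u)"
      using norm_orth_proj_span_residual_le[OF fin approx[of c]] by (simp add: g_def algebra_simps)
    then have "(norm (v - ?Q v))\<^sup>2 \<le> (norm (g - c *\<^sub>R u))\<^sup>2"
      by (simp add: power_mono)
    also have "\<dots> = inner g g - (inner v u)\<^sup>2 / inner u u"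
      using gu uu unfolding c_def power2_norm_eq_inner
      by (simp add: inner_diff_left inner_diff_right inner_commute field_simps power2_eq_square)
    also have "\<dots> \<le> inner g g - (inner v u)\<^sup>2"
      using uu uu1 by (simp add: le_divide_eq mult_left_le)
    finally show ?thesis unfolding g_def u_def by (simp add: power2_norm_eq_inner)
  qed
qed

lemma inner_orthonormal_expansion:
  fixes \<phi> :: "nat \<Rightarrow> 'a::real_inner"
  assumes on: "\<forall>i<n. \<forall>j<n. inner (\<phi> i) (\<phi> j) = (if i = j then 1 else 0)"
    and x: "x \<in> span (\<phi> ` {..<n})"
  shows "inner x u = (\<Sum>i<n. inner (\<phi> i) u * inner x (\<phi> i))"
  using x
proof (induction rule: span_induct_alt)
  case base
  then show ?case by simp
next
  case (step c x y)
  then obtain j where j: "j < n" "x = \<phi> j" by auto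
  have "(\<Sum>i<n. inner (\<phi> i) u * inner (\<phi> j) (\<phi> i)) = (\<Sum>i<n. if i = j then inner (\<phi> j) u else 0)"
    using on j(1) by (intro sum.cong) auto
  also have "\<dots> = inner (\<phi> j) u" using j(1) by simp
  finally have "(\<Sum>i<n. inner (\<phi> i) u * inner (\<phi> j) (\<phi> i)) = inner (\<phi> j) u" .
  moreover have "(\<Sum>i<n. inner (\<phi> i) u * inner (c *\<^sub>R x + y) (\<phi> i))
     = c * (\<Sum>i<n. inner (\<phi> i) u * inner (\<phi> j) (\<phi> i)) + (\<Sum>i<n. inner (\<phi> i) u * inner y (\<phi> i))"
    using j by (simp add: inner_add_left sum.distrib sum_distrib_left algebra_simps)
  ultimately show ?case using step.IH j by (simp add: inner_add_left)
qed

lemma inner_square_le_orthonormal_sum: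
  fixes \<phi> :: "nat \<Rightarrow> 'a::real_inner"
  assumes on: "\<forall>i<n. \<forall>j<n. inner (\<phi> i) (\<phi> j) = (if i = j then 1 else 0)"
    and x: "x \<in> span (\<phi> ` {..<n})"
  shows "(inner x u)\<^sup>2 \<le> (norm x)\<^sup>2 * (\<Sum>i<n. (inner (\<phi> i) u)\<^sup>2)"
proof -
  define q where "q = (\<Sum>i<n. inner (\<phi> i) u *\<^sub>R \<phi> i)"
  have "q \<in> span (\<phi> ` {..<n})" unfolding q_def
    by (intro span_sum span_scale span_base) auto
  then have "inner q q = inner q u"
    using inner_orthonormal_expansion[OF on, of q u] by (simp add: q_def inner_sum_right)
  also have "\<dots> = (\<Sum>i<n. (inner (\<phi> i) u)\<^sup>2)"
    unfolding q_def by (simp add: inner_sum_left power2_eq_square)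
  finally have qq: "inner q q = (\<Sum>i<n. (inner (\<phi> i) u)\<^sup>2)" .
  have "inner x q = inner x u"
    unfolding q_def using inner_orthonormal_expansion[OF on x, of u] by (simp add: inner_sum_right)
  then show ?thesis
    using Cauchy_Schwarz_ineq[of x q] qq by (simp add: power2_norm_eq_inner)
qed

lemma norm_orth_proj_span_residual_sq_le:
  fixes \<phi> :: "nat \<Rightarrow> 'a::real_inner"
  assumes on: "\<forall>i<n. \<forall>j<n. inner (\<phi> i) (\<phi> j) = (if i = j then 1 else 0)"
    and x: "x \<in> span (\<phi> ` {..<n})" "norm x \<le> 1" and "finite S"
  defines "g \<equiv> x - orth_proj (span S) x"
  shows "(norm g)\<^sup>2 \<le> (\<Sum>i<n. \<bar>inner (\<phi> i) g\<bar>)"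
proof -
  have "inner g (orth_proj (span S) x) = 0"
    unfolding g_def using orth_proj_span_in_span orth_proj_span_orthogonal \<open>finite S\<close> by blast
  then have "(norm g)\<^sup>2 = inner x g"
    by (simp add: power2_norm_eq_inner g_def inner_diff_right inner_commute)
  also have "\<dots> = (\<Sum>i<n. inner (\<phi> i) g * inner x (\<phi> i))"
    using inner_orthonormal_expansion[OF on x(1)] .
  also have "\<dots> \<le> (\<Sum>i<n. \<bar>inner (\<phi> i) g\<bar>)"
  proof (rule sum_mono)
    fix i assume "i \<in> {..<n}"
    then have "norm (\<phi> i) = 1" using on by (simp add: norm_eq_sqrt_inner)
    then have "\<bar>inner x (\<phi> i)\<bar> \<le> 1"
      using Cauchy_Schwarz_ineq2[of x "\<phi> i"] x(2) by (simp add: mult_le_one)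
    then show "inner (\<phi> i) g * inner x (\<phi> i) \<le> \<bar>inner (\<phi> i) g\<bar>"
      by (metis abs_ge_self abs_mult mult_left_le abs_ge_zero order_trans)
  qed
  finally show ?thesis .
qed

lemma LIMSEQ_zero_of_square_le_decrement:
  fixes r a :: "nat \<Rightarrow> real"
  assumes "\<forall>k. 0 \<le> r k" "\<forall>k. (a k)\<^sup>2 \<le> r k - r (Suc k)"
  shows "a \<longlonglongrightarrow> 0"
proof -
  have "decseq r"
    using assms(2) by (intro decseq_SucI) (metis diff_ge_0_iff_ge order_trans zero_le_power2)
  then obtain L where "r \<longlonglongrightarrow> L" using decseq_convergent assms(1) by blast
  then have "(\<lambda>k. r k - r (Suc k)) \<longlonglongrightarrow> 0"
    using tendsto_diff[OF _ LIMSEQ_Suc] by fastforce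
  then have "(\<lambda>k. (a k)\<^sup>2) \<longlonglongrightarrow> 0"
    by (rule Lim_null_comparison[OF always_eventually, rotated]) (simp add: assms(2))
  then have "(\<lambda>k. \<bar>a k\<bar>) \<longlonglongrightarrow> 0"
    using tendsto_real_sqrt by fastforce
  then show ?thesis by (simp add: tendsto_rabs_zero_iff)
qed

lemma inner_tendsto_zero_of_closure_span:
  fixes g :: "nat \<Rightarrow> 'a::real_inner"
  assumes dense: "closure (span D) = UNIV"
    and D: "\<forall>\<eta>\<in>D. (\<lambda>k. inner \<eta> (g k)) \<longlonglongrightarrow> 0"
    and bounded: "\<forall>k. norm (g k) \<le> B"
  shows "(\<lambda>k. inner x (g k)) \<longlonglongrightarrow> 0"
proof -
  have span: "(\<lambda>k. inner y (g k)) \<longlonglongrightarrow> 0" if "y \<in> span D" for y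
    using that
  proof (induction rule: span_induct_alt)
    case (step c x y)
    then have "(\<lambda>k. c * inner x (g k) + inner y (g k)) \<longlonglongrightarrow> c * 0 + 0"
      using D by (intro tendsto_intros) auto
    then show ?case by (simp add: inner_add_left)
  qed simp
  show ?thesis
  proof (rule LIMSEQ_I)
    fix e :: real assume "0 < e"
    define d where "d = e / (2 * (\<bar>B\<bar> + 1))"
    have "0 < d" using \<open>0 < e\<close> by (simp add: d_def add_pos_nonneg)
    then obtain y where y: "y \<in> span D" "dist y x < d"
      using dense closure_approachable[of x "span D"] by blast
    obtain N where N: "\<forall>k\<ge>N. norm (inner y (g k)) < e / 2"
      using LIMSEQ_D[OF span[OF y(1)], of "e/2"] \<open>0 < e\<close> by auto
    have "norm (inner x (g k)) < e" if "k \<ge> N" for k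
    proof -
      have "\<bar>inner (x - y) (g k)\<bar> \<le> norm (x - y) * norm (g k)"
        by (rule Cauchy_Schwarz_ineq2)
      also have "\<dots> \<le> d * (\<bar>B\<bar> + 1)"
      proof (rule mult_mono)
        show "norm (x - y) \<le> d" using y(2) by (simp add: dist_norm norm_minus_commute)
        show "norm (g k) \<le> \<bar>B\<bar> + 1" using bounded abs_ge_self[of B] by (meson add_increasing2 order_trans zero_le_one)
      qed (use \<open>0 < d\<close> in simp_all)
      also have "\<dots> = e / 2"
        unfolding d_def by (simp add: add_pos_nonneg divide_simps)
      finally have "\<bar>inner (x - y) (g k)\<bar> \<le> e / 2" .
      moreover have "\<bar>inner y (g k)\<bar> < e / 2" using N that by simp
      moreover have "\<bar>inner x (g k)\<bar> \<le> \<bar>inner y (g k)\<bar> + \<bar>inner (x - y) (g k)\<bar>"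
        using abs_triangle_ineq[of "inner y (g k)" "inner (x - y) (g k)"] by (simp add: inner_diff_left)
      ultimately show ?thesis by simp
    qed
    then show "\<exists>N. \<forall>k\<ge>N. norm (inner x (g k) - 0) < e" by auto
  qed
qed

lemma weak_greedy_inner_tendsto_zero:
  fixes g \<omega> :: "nat \<Rightarrow> 'a::real_inner"
  assumes unit: "\<forall>\<eta>\<in>D. norm \<eta> = 1" and "0 < \<kappa>"
    and greedy: "\<forall>k. \<kappa> * (SUP \<eta>\<in>D. \<bar>inner (g k) \<eta>\<bar>) \<le> \<bar>inner (g k) (\<omega> k)\<bar>"
    and chosen: "(\<lambda>k. inner (g k) (\<omega> k)) \<longlonglongrightarrow> 0"
    and "\<eta> \<in> D"
  shows "(\<lambda>k. inner \<eta> (g k)) \<longlonglongrightarrow> 0"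
proof (rule Lim_null_comparison[OF always_eventually])
  show "\<forall>k. norm (inner \<eta> (g k)) \<le> \<bar>inner (g k) (\<omega> k)\<bar> / \<kappa>"
  proof
    fix k
    have "bdd_above ((\<lambda>\<eta>. \<bar>inner (g k) \<eta>\<bar>) ` D)"
    proof (rule bdd_aboveI2)
      fix x assume "x \<in> D"
      then show "\<bar>inner (g k) x\<bar> \<le> norm (g k)" using Cauchy_Schwarz_ineq2[of "g k" x] unit by simp
    qed
    then have "\<bar>inner (g k) \<eta>\<bar> \<le> (SUP \<eta>\<in>D. \<bar>inner (g k) \<eta>\<bar>)"
      by (rule cSUP_upper[OF \<open>\<eta> \<in> D\<close>])
    then have "\<kappa> * \<bar>inner (g k) \<eta>\<bar> \<le> \<kappa> * (SUP \<eta>\<in>D. \<bar>inner (g k) \<eta>\<bar>)"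
      using \<open>0 < \<kappa>\<close> by simp
    then have "\<kappa> * \<bar>inner (g k) \<eta>\<bar> \<le> \<bar>inner (g k) (\<omega> k)\<bar>"
      using greedy by (meson order_trans)
    then show "norm (inner \<eta> (g k)) \<le> \<bar>inner (g k) (\<omega> k)\<bar> / \<kappa>"
      using \<open>0 < \<kappa>\<close> by (simp add: pos_le_divide_eq mult.commute inner_commute)
  qed
  show "(\<lambda>k. \<bar>inner (g k) (\<omega> k)\<bar> / \<kappa>) \<longlonglongrightarrow> 0"
    using tendsto_divide_zero[OF tendsto_rabs_zero[OF chosen]] by simp
qed

lemma omp_space_Suc: "omp_space \<omega> (Suc k) = span (insert (\<omega> (Suc k)) (\<omega> ` {1..k}))"
  unfolding omp_space_def by (simp add: atLeastAtMostSuc_conv)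

lemma omp_residual_decrement:
  fixes \<phi> \<omega> :: "nat \<Rightarrow> 'a::real_inner"
  assumes on: "\<forall>i<n. \<forall>j<n. inner (\<phi> i) (\<phi> j) = (if i = j then 1 else 0)"
    and x: "x \<in> span (\<phi> ` {..<n})" "norm x \<le> 1"
    and "norm (\<omega> (Suc k)) \<le> 1"
  shows "(inner (x - orth_proj (omp_space \<omega> k) x) (\<omega> (Suc k)))\<^sup>2
    \<le> omp_residual n \<phi> \<omega> k - omp_residual n \<phi> \<omega> (Suc k)"
proof -
  let ?P = "orth_proj (omp_space \<omega> k)"
  define u where "u = \<omega> (Suc k) - ?P (\<omega> (Suc k))"
  have fin: "finite (\<omega> ` {1..k})" by simp
  have "omp_residual n \<phi> \<omega> (Suc k)
      \<le> (\<Sum>i<n. (norm (\<phi> i - ?P (\<phi> i)))\<^sup>2 - (inner (\<phi> i) u)\<^sup>2)"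
    unfolding omp_residual_def omp_space_Suc
    using orth_proj_span_insert_residual_le[OF fin assms(4)]
    by (intro sum_mono) (simp add: u_def omp_space_def)
  also have "\<dots> = omp_residual n \<phi> \<omega> k - (\<Sum>i<n. (inner (\<phi> i) u)\<^sup>2)"
    unfolding omp_residual_def by (simp add: sum_subtractf)
  finally have "(\<Sum>i<n. (inner (\<phi> i) u)\<^sup>2) \<le> omp_residual n \<phi> \<omega> k - omp_residual n \<phi> \<omega> (Suc k)"
    by simp
  moreover have "(inner x u)\<^sup>2 \<le> (\<Sum>i<n. (inner (\<phi> i) u)\<^sup>2)"
  proof -
    have "(inner x u)\<^sup>2 \<le> (norm x)\<^sup>2 * (\<Sum>i<n. (inner (\<phi> i) u)\<^sup>2)"
      by (rule inner_square_le_orthonormal_sum[OF on x(1)])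
    also have "\<dots> \<le> (\<Sum>i<n. (inner (\<phi> i) u)\<^sup>2)"
      using x(2) by (intro mult_left_le_one_le sum_nonneg) (simp_all add: power_le_one)
    finally show ?thesis .
  qed
  moreover have "inner (x - ?P x) (\<omega> (Suc k)) = inner x u"
    unfolding u_def omp_space_def by (rule inner_orth_proj_span_residual_commute[OF fin])
  ultimately show ?thesis by simp
qed

lemma omp_residual_le_worst_case:
  fixes \<phi> \<omega> :: "nat \<Rightarrow> 'a::real_inner"
  assumes on: "\<forall>i<n. \<forall>j<n. inner (\<phi> i) (\<phi> j) = (if i = j then 1 else 0)"
    and x: "x \<in> span (\<phi> ` {..<n})" "norm x \<le> 1"
    and worst: "\<forall>u\<in>span (\<phi> ` {..<n}). norm u = 1 \<longrightarrow>
      norm (u - orth_proj (omp_space \<omega> k) u) \<le> norm (x - orth_proj (omp_space \<omega> k) x)"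
  shows "omp_residual n \<phi> \<omega> k
    \<le> real n * (\<Sum>i<n. \<bar>inner (\<phi> i) (x - orth_proj (omp_space \<omega> k) x)\<bar>)"
proof -
  let ?g = "x - orth_proj (omp_space \<omega> k) x"
  have "omp_residual n \<phi> \<omega> k \<le> (\<Sum>i<n. (norm ?g)\<^sup>2)"
    unfolding omp_residual_def
  proof (rule sum_mono)
    fix i assume "i \<in> {..<n}"
    then have "\<phi> i \<in> span (\<phi> ` {..<n})" "norm (\<phi> i) = 1"
      using on by (auto intro: span_base simp: norm_eq_sqrt_inner)
    then show "(norm (\<phi> i - orth_proj (omp_space \<omega> k) (\<phi> i)))\<^sup>2 \<le> (norm ?g)\<^sup>2"
      using worst by (simp add: power_mono)
  qed
  also have "\<dots> \<le> real n * (\<Sum>i<n. \<bar>inner (\<phi> i) ?g\<bar>)"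
    using norm_orth_proj_span_residual_sq_le[OF on x, of "\<omega> ` {1..k}"]
    by (simp add: omp_space_def mult_left_mono)
  finally show ?thesis .
qed

lemma worst_case_ompD:
  fixes k :: nat
  assumes "worst_case_omp D Vn \<kappa> v \<omega>"
  defines "g \<equiv> v (Suc k) - orth_proj (omp_space \<omega> k) (v (Suc k))"
  shows "v (Suc k) \<in> Vn" "norm (v (Suc k)) = 1"
    "\<forall>u\<in>Vn. norm u = 1 \<longrightarrow> norm (u - orth_proj (omp_space \<omega> k) u) \<le> norm g"
    "\<omega> (Suc k) \<in> D" "\<kappa> * (SUP \<eta>\<in>D. \<bar>inner g \<eta>\<bar>) \<le> \<bar>inner g (\<omega> (Suc k))\<bar>"
  using assms(1)[unfolded worst_case_omp_def, rule_format, of "Suc k"] by (simp_all add: g_def)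

theorem mainTheorem13:
  fixes D :: "'a::{real_inner, complete_space} set"
    and \<phi> :: "nat \<Rightarrow> 'a" and n :: nat and \<kappa> :: real
    and v \<omega> :: "nat \<Rightarrow> 'a"
  assumes "dictionary D"
    and "\<forall>i<n. \<forall>j<n. inner (\<phi> i) (\<phi> j) = (if i = j then 1 else 0)"
    and "0 < \<kappa>" and "\<kappa> < 1"
    and "worst_case_omp D (span (\<phi> ` {..<n})) \<kappa> v \<omega>"
  shows "omp_residual n \<phi> \<omega> \<longlonglongrightarrow> 0"
proof -
  define g where "g k = v (Suc k) - orth_proj (omp_space \<omega> k) (v (Suc k))" for k
  note omp = worst_case_ompD[OF assms(5), folded g_def]
  have unit: "\<forall>\<eta>\<in>D. norm \<eta> = 1" and dense: "closure (span D) = UNIV"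
    using assms(1) by (simp_all add: dictionary_def)
  have g_bounded: "\<forall>k. norm (g k) \<le> 1"
    unfolding g_def omp_space_def
    using norm_orth_proj_span_residual_le_norm omp(2) by (metis finite_imageI finite_atLeastAtMost)
  have "(\<lambda>k. inner (g k) (\<omega> (Suc k))) \<longlonglongrightarrow> 0"
    using omp_residual_decrement[OF assms(2)] omp unit
    by (intro LIMSEQ_zero_of_square_le_decrement[of "omp_residual n \<phi> \<omega>"])
      (auto simp: g_def omp_residual_def sum_nonneg)
  then have "\<forall>\<eta>\<in>D. (\<lambda>k. inner \<eta> (g k)) \<longlonglongrightarrow> 0"
    using weak_greedy_inner_tendsto_zero[OF unit assms(3), where g = g and \<omega> = "\<lambda>k. \<omega> (Suc k)"] omp(5)
    by blast
  then have "(\<lambda>k. inner x (g k)) \<longlonglongrightarrow> 0" for x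
    using inner_tendsto_zero_of_closure_span[OF dense] g_bounded by blast
  then have "(\<lambda>k. \<Sum>i<n. \<bar>inner (\<phi> i) (g k)\<bar>) \<longlonglongrightarrow> 0"
    by (intro tendsto_null_sum tendsto_rabs_zero)
  then have "(\<lambda>k. real n * (\<Sum>i<n. \<bar>inner (\<phi> i) (g k)\<bar>)) \<longlonglongrightarrow> 0"
    by (rule tendsto_mult_right_zero)
  moreover have "\<forall>k. norm (omp_residual n \<phi> \<omega> k) \<le> real n * (\<Sum>i<n. \<bar>inner (\<phi> i) (g k)\<bar>)"
    using omp_residual_le_worst_case[OF assms(2)] omp by (simp add: g_def omp_residual_def sum_nonneg)
  ultimately show ?thesis
    by (rule Lim_null_comparison[OF always_eventually, rotated])
qed

end
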